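(* Let $\varrho$ be a proximate order and $\sigma_2>\sigma_1>0$. Then the inclusion map $A_{\varrho,\sigma_1}\hookrightarrow A_{\varrho,\sigma_2}$ is compact.
   Context: $\mathbb{R}_n$ is the real Clifford algebra generated by $e_1,\dots,e_n$ with $e_ie_j=-e_je_i$ ($i\ne j$), $e_i^2=-1$, with Euclidean norm $|a|^2=\sum_Aa_A^2$. Paravectors $x=x_0+\sum x_\ell e_\ell$ are identified with $\mathbb{R}^{n+1}$; $\mathbb{S}=\{\sum x_\ell e_\ell:\sum x_\ell^2=1\}$. $\mathcal{SM}_L(\mathbb{R}^{n+1})$ is the set of entire left slice monogenic functions: $f(u+jv)=f_0(u,v)+jf_1(u,v)$ for all $u,v\in\mathbb{R}$, $j\in\mathbb{S}$, with $f_0,f_1:\mathbb{R}^2\to\mathbb{R}_n$ continuously differentiable, $f_0$ even and $f_1$ odd in $v$, $\partial_uf_0=\partial_vf_1$, $\partial_vf_0=-\partial_uf_1$. A proximate order is a differentiable $\varrho:[0,\infty)\to[0,\infty)$ with $\lim_{r\to\infty}\varrho(r)=\rho>0$ and $\lim_{r\to\infty}\varrho'(r)r\ln r=0$. For $\sigma>0$, $A_{\varrho,\sigma}$ is the Banach space $\{f\in\mathcal{SM}_L(\mathbb{R}^{n+1}):\|f\|_{\varrho,\sigma}:=\sup_x|f(x)|e^{-\sigma|x|^{\varrho(|x|)}}<\infty\}$. *)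

theory Defs
  imports "HOL-Analysis.Analysis"
begin

text \<open>The generators e_1..e_n are indexed by a finite
linearly ordered type 'n (so n = CARD('n)); an element of R_n is a real vector indexed by
subsets A of the generators (basis blade e_A), with the Euclidean norm.\<close>

type_synonym 'n clif = "real ^ ('n set)"

definition csign :: "'n::{finite,linorder} set \<Rightarrow> 'n set \<Rightarrow> real" where
  "csign A B = (-1) ^ (card {(a, b). a \<in> A \<and> b \<in> B \<and> b < a} + card (A \<inter> B))"

text \<open>e_A e_B = csign A B e_(A symmetric-difference B), extended bilinearly.\<close>
definition cmul :: "'n::{finite,linorder} clif \<Rightarrow> 'n clif \<Rightarrow> 'n clif" where
  "cmul a b = (\<chi> C. \<Sum>A\<in>UNIV. csign A ((A - C) \<union> (C - A)) * (a $ A) * (b $ ((A - C) \<union> (C - A))))"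

text \<open>Paravectors x_0 + sum x_l e_l, identified with R^(n+1) = real \<times> real^'n.\<close>
definition para :: "real \<times> (real ^ 'n::finite) \<Rightarrow> 'n clif" where
  "para p = (\<chi> A. if A = {} then fst p else if (\<exists>i. A = {i}) then snd p $ (THE i. A = {i}) else 0)"

definition sphereS :: "(real ^ 'n::finite) set" where
  "sphereS = {j. norm j = 1}"

definition C1_partials ::
  "(real \<Rightarrow> real \<Rightarrow> 'n::finite clif) \<Rightarrow> (real \<Rightarrow> real \<Rightarrow> 'n clif) \<Rightarrow> (real \<Rightarrow> real \<Rightarrow> 'n clif) \<Rightarrow> bool" where
  "C1_partials F Fu Fv \<longleftrightarrow>
     (\<forall>u v. ((\<lambda>t. F t v) has_vector_derivative Fu u v) (at u)) \<and>
     (\<forall>u v. ((\<lambda>t. F u t) has_vector_derivative Fv u v) (at v)) \<and>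
     continuous_on UNIV (\<lambda>(u, v). Fu u v) \<and> continuous_on UNIV (\<lambda>(u, v). Fv u v)"

definition slice_monogenic :: "(real \<times> (real ^ 'n::{finite,linorder}) \<Rightarrow> 'n clif) \<Rightarrow> bool" where
  "slice_monogenic f \<longleftrightarrow>
    (\<exists>f0 f1 f0u f0v f1u f1v.
       C1_partials f0 f0u f0v \<and> C1_partials f1 f1u f1v \<and>
       (\<forall>u v. f0 u (-v) = f0 u v) \<and> (\<forall>u v. f1 u (-v) = - f1 u v) \<and>
       (\<forall>u v. f0u u v = f1v u v) \<and> (\<forall>u v. f0v u v = - f1u u v) \<and>
       (\<forall>u v j. j \<in> sphereS \<longrightarrow> f (u, v *\<^sub>R j) = f0 u v + cmul (para (0, j)) (f1 u v)))"

definition proximate_order :: "(real \<Rightarrow> real) \<Rightarrow> bool" where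
  "proximate_order \<rho> \<longleftrightarrow>
     (\<forall>r\<ge>0. \<rho> r \<ge> 0) \<and>
     (\<forall>r\<ge>0. \<rho> differentiable (at r within {0..})) \<and>
     (\<exists>\<rho>0>0. (\<rho> \<longlongrightarrow> \<rho>0) at_top) \<and>
     ((\<lambda>r. deriv \<rho> r * r * ln r) \<longlongrightarrow> 0) at_top"

definition weight :: "(real \<Rightarrow> real) \<Rightarrow> real \<Rightarrow> real \<times> (real ^ 'n::finite) \<Rightarrow> real" where
  "weight \<rho> \<sigma> x = exp (- \<sigma> * (norm x powr \<rho> (norm x)))"

definition Anorm :: "(real \<Rightarrow> real) \<Rightarrow> real \<Rightarrow> (real \<times> (real ^ 'n) \<Rightarrow> 'n::finite clif) \<Rightarrow> real" where
  "Anorm \<rho> \<sigma> f = (SUP x. norm (f x) * weight \<rho> \<sigma> x)"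

definition Aspace :: "(real \<Rightarrow> real) \<Rightarrow> real \<Rightarrow> (real \<times> (real ^ 'n::{finite,linorder}) \<Rightarrow> 'n clif) set" where
  "Aspace \<rho> \<sigma> = {f. slice_monogenic f \<and> bdd_above (range (\<lambda>x. norm (f x) * weight \<rho> \<sigma> x))}"

end

theory Submission
  imports Defs "HOL-Complex_Analysis.Great_Picard" "HOL-Real_Asymp.Real_Asymp"
begin

text \<open>A slice monogenic function is the slice extension of a holomorphic stem function \<open>H\<close>
  (one complex coordinate per basis blade), and a growth bound
  \<open>|f(x)| \<le> M exp (\<sigma>\<^sub>1 |x|\<^bsup>\<rho>(|x|)\<^esup>)\<close> passes to \<open>H\<close>. So the stems of a bounded sequence in
  \<open>A\<^sub>\<rho>\<^sub>,\<^sub>\<sigma>\<^sub>1\<close> are locally uniformly bounded, and by Montel's theorem a subsequence converges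
  locally uniformly to a stem whose slice extension \<open>g\<close> has the same growth. On a ball the
  \<open>\<sigma>\<^sub>2\<close>-norm of \<open>F\<^sub>k - g\<close> is controlled by the uniform convergence; outside a large ball it is
  at most a constant times \<open>exp (- (\<sigma>\<^sub>2 - \<sigma>\<^sub>1) r\<^bsup>\<rho>(r)\<^esup>)\<close>, which is small as
  \<open>r\<^bsup>\<rho>(r)\<^esup> \<rightarrow> \<infinity>\<close>.\<close>

lemma cmul_nth:
  "cmul a b $ C = (\<Sum>A\<in>UNIV. csign A ((A - C) \<union> (C - A)) * a $ A * b $ ((A - C) \<union> (C - A)))"
  by (simp add: cmul_def)

lemma cmul_zero_left [simp]: "cmul 0 b = 0"
  by (simp add: vec_eq_iff cmul_nth)

lemma cmul_zero_right [simp]: "cmul a 0 = 0"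
  by (simp add: vec_eq_iff cmul_nth)

lemma cmul_minus_left: "cmul (- a) b = - cmul a b"
  by (simp add: vec_eq_iff cmul_nth sum_negf[symmetric])

lemma cmul_minus_right: "cmul a (- b) = - cmul a b"
  by (simp add: vec_eq_iff cmul_nth sum_negf[symmetric])

lemma cmul_diff_right: "cmul a (b - c) = cmul a b - cmul a c"
  by (simp add: vec_eq_iff cmul_nth sum_subtractf[symmetric] algebra_simps)

lemma abs_csign [simp]: "\<bar>csign A B\<bar> = 1"
  by (simp add: csign_def)

lemma norm_cmul_le:
  fixes a b :: "'n::{finite,linorder} clif"
  shows "norm (cmul a b) \<le> real CARD('n set) ^ 2 * norm a * norm b"
proof -
  have "\<bar>cmul a b $ C\<bar> \<le> real CARD('n set) * (norm a * norm b)" for C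
  proof -
    have "\<bar>cmul a b $ C\<bar> \<le> (\<Sum>A\<in>UNIV. \<bar>csign A ((A - C) \<union> (C - A)) * a $ A * b $ ((A - C) \<union> (C - A))\<bar>)"
      unfolding cmul_nth by (rule sum_abs)
    also have "\<dots> \<le> (\<Sum>A\<in>(UNIV::'n set set). norm a * norm b)"
      by (intro sum_mono) (auto simp: abs_mult intro!: mult_mono component_le_norm_cart)
    finally show ?thesis by simp
  qed
  then have "(\<Sum>C\<in>UNIV. \<bar>cmul a b $ C\<bar>) \<le> (\<Sum>C\<in>(UNIV::'n set set). real CARD('n set) * (norm a * norm b))"
    by (intro sum_mono)
  with norm_le_l1_cart[of "cmul a b"] show ?thesis
    by (simp add: power2_eq_square mult_ac)
qed

lemma para_zero [simp]: "para (0, 0) = 0"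
  by (simp add: para_def vec_eq_iff)

lemma para_uminus: "para (0, - j) = - para (0, j)"
  by (simp add: para_def vec_eq_iff)

lemma norm_para_le: "norm (para (0, j)) \<le> real CARD('n set) * norm (j :: real ^ 'n::finite)"
proof -
  have "(\<Sum>A\<in>UNIV. \<bar>para (0, j) $ A\<bar>) \<le> (\<Sum>A\<in>(UNIV::'n set set). norm j)"
    by (intro sum_mono) (auto simp: para_def component_le_norm_cart)
  with norm_le_l1_cart[of "para (0, j)"] show ?thesis
    by simp
qed

lemma para_axis: "para (0, axis i 1) = (\<chi> A. if A = {i} then 1 else 0)"
  by (auto simp: vec_eq_iff para_def axis_def)

text \<open>Left multiplication by a generator \<open>e\<^sub>i\<close> permutes the basis blades up to sign.\<close>
lemma norm_cmul_para_axis: "norm (cmul (para (0, axis i 1)) b) = norm b"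
proof -
  let ?s = "\<lambda>C. ({i} - C) \<union> (C - {i})"
  have "cmul (para (0, axis i 1)) b $ C = csign {i} (?s C) * b $ ?s C" for C
    unfolding cmul_nth para_axis by (simp add: if_distrib if_distribR cong: if_cong)
  then have "(\<Sum>C\<in>UNIV. (cmul (para (0, axis i 1)) b $ C)\<^sup>2) = (\<Sum>C\<in>UNIV. (b $ ?s C)\<^sup>2)"
    by (simp add: power_mult_distrib csign_def flip: power_mult)
  also have "\<dots> = (\<Sum>C\<in>UNIV. (b $ C)\<^sup>2)"
  proof (rule sum.reindex_bij_witness[of _ ?s ?s])
  qed auto
  finally show ?thesis
    by (simp add: norm_vec_def L2_set_def)
qed

lemma has_vector_derivative_vec_iff:
  fixes f :: "real \<Rightarrow> real ^ 'a::finite"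
  shows "(f has_vector_derivative d) (at t) \<longleftrightarrow> (\<forall>A. ((\<lambda>s. f s $ A) has_real_derivative d $ A) (at t))"
  unfolding has_vector_derivative_def has_field_derivative_def
  by (subst has_derivative_componentwise_within) (auto simp: Basis_vec_def inner_axis mult_commute_abs)

lemma Cauchy_Riemann_imp_holomorphic:
  fixes a b au av bu bv :: "real \<Rightarrow> real \<Rightarrow> real"
  assumes au: "\<And>u v. ((\<lambda>t. a t v) has_real_derivative au u v) (at u)"
    and av: "\<And>u v. ((\<lambda>t. a u t) has_real_derivative av u v) (at v)"
    and bu: "\<And>u v. ((\<lambda>t. b t v) has_real_derivative bu u v) (at u)"
    and bv: "\<And>u v. ((\<lambda>t. b u t) has_real_derivative bv u v) (at v)"
    and cont: "continuous_on UNIV (\<lambda>(u, v). av u v)" "continuous_on UNIV (\<lambda>(u, v). bv u v)"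
    and CR: "\<And>u v. au u v = bv u v" "\<And>u v. av u v = - bu u v"
  shows "(\<lambda>z. Complex (a (Re z) (Im z)) (b (Re z) (Im z))) holomorphic_on UNIV"
proof -
  define c where "c u v = Complex (a u v) (b u v)" for u v
  define cu where "cu u v = Complex (au u v) (bu u v)" for u v
  define cv where "cv u v = Complex (av u v) (bv u v)" for u v
  have "((\<lambda>t. c t v) has_vector_derivative cu u v) (at u)" for u v
    unfolding c_def cu_def Complex_eq
    by (intro derivative_eq_intros has_vector_derivative_real_field) (auto intro: au bu)
  then have dcu: "((\<lambda>t. c t v) has_derivative (\<lambda>t. t *\<^sub>R cu u v)) (at u within UNIV)" for u v
    by (simp add: has_vector_derivative_def)
  have "((\<lambda>t. c u t) has_vector_derivative cv u v) (at v)" for u v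
    unfolding c_def cv_def Complex_eq
    by (intro derivative_eq_intros has_vector_derivative_real_field) (auto intro: av bv)
  then have dcv: "((\<lambda>t. c u t) has_derivative blinfun_scaleR_left (cv u v)) (at v within UNIV)" for u v
    by (simp add: has_vector_derivative_def)
  have "continuous_on UNIV (\<lambda>(u, v). blinfun_scaleR_left (cv u v))"
    using cont unfolding cv_def Complex_eq by (auto intro!: continuous_intros simp: split_beta)
  then have ccv: "continuous (at (u, v) within UNIV \<times> UNIV) (\<lambda>(u, v). blinfun_scaleR_left (cv u v))" for u v
    by (simp add: continuous_on_eq_continuous_at)
  have dc: "((\<lambda>(u, v). c u v) has_derivative (\<lambda>(s, t). s *\<^sub>R cu u v + t *\<^sub>R cv u v)) (at (u, v))" for u v
    using has_derivative_partialsI[OF dcu dcv ccv UNIV_I convex_UNIV] by simp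
  have "((\<lambda>z. c (Re z) (Im z)) has_field_derivative cu (Re z) (Im z)) (at z)" for z
  proof -
    have "((\<lambda>z. (Re z, Im z)) has_derivative (\<lambda>w. (Re w, Im w))) (at z)"
      by (intro derivative_eq_intros) auto
    from has_derivative_compose[OF this dc]
    have "((\<lambda>z. c (Re z) (Im z)) has_derivative
        (\<lambda>w. Re w *\<^sub>R cu (Re z) (Im z) + Im w *\<^sub>R cv (Re z) (Im z))) (at z)"
      by simp
    moreover have "(\<lambda>w. Re w *\<^sub>R cu (Re z) (Im z) + Im w *\<^sub>R cv (Re z) (Im z)) = (*) (cu (Re z) (Im z))"
      by (auto simp: fun_eq_iff cu_def cv_def CR complex_eq_iff)
    ultimately show ?thesis
      by (simp add: has_field_derivative_def)
  qed
  then show ?thesis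
    unfolding c_def[symmetric] holomorphic_on_def field_differentiable_def by auto
qed

lemma holomorphic_Re_Im_partials:
  assumes "H holomorphic_on UNIV"
  shows "((\<lambda>t. Re (H (Complex t v))) has_real_derivative Re (deriv H (Complex u v))) (at u)"
    and "((\<lambda>t. Im (H (Complex t v))) has_real_derivative Im (deriv H (Complex u v))) (at u)"
    and "((\<lambda>t. Re (H (Complex u t))) has_real_derivative - Im (deriv H (Complex u v))) (at v)"
    and "((\<lambda>t. Im (H (Complex u t))) has_real_derivative Re (deriv H (Complex u v))) (at v)"
proof -
  have dH: "(H has_field_derivative deriv H z) (at z)" for z
    using assms by (auto intro: holomorphic_derivI)
  have "((\<lambda>t. Complex t v) has_vector_derivative 1) (at u)"
    unfolding Complex_eq by (auto intro!: derivative_eq_intros has_vector_derivative_real_field)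
  from field_vector_diff_chain_at[OF this dH]
  have du: "((\<lambda>t. H (Complex t v)) has_vector_derivative deriv H (Complex u v)) (at u)"
    by (simp add: o_def)
  have "((\<lambda>t. Complex u t) has_vector_derivative \<i>) (at v)"
    unfolding Complex_eq by (auto intro!: derivative_eq_intros has_vector_derivative_real_field)
  from field_vector_diff_chain_at[OF this dH]
  have dv: "((\<lambda>t. H (Complex u t)) has_vector_derivative \<i> * deriv H (Complex u v)) (at v)"
    by (simp add: o_def)
  note Re = bounded_linear.has_vector_derivative[OF bounded_linear_Re]
  note Im = bounded_linear.has_vector_derivative[OF bounded_linear_Im]
  show "((\<lambda>t. Re (H (Complex t v))) has_real_derivative Re (deriv H (Complex u v))) (at u)"
    using Re[OF du] by (simp add: has_real_derivative_iff_has_vector_derivative)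
  show "((\<lambda>t. Im (H (Complex t v))) has_real_derivative Im (deriv H (Complex u v))) (at u)"
    using Im[OF du] by (simp add: has_real_derivative_iff_has_vector_derivative)
  show "((\<lambda>t. Re (H (Complex u t))) has_real_derivative - Im (deriv H (Complex u v))) (at v)"
    using Re[OF dv] by (simp add: has_real_derivative_iff_has_vector_derivative)
  show "((\<lambda>t. Im (H (Complex u t))) has_real_derivative Re (deriv H (Complex u v))) (at v)"
    using Im[OF dv] by (simp add: has_real_derivative_iff_has_vector_derivative)
qed

lemma continuous_on_deriv_Complex:
  assumes "H holomorphic_on UNIV"
  shows "continuous_on UNIV (\<lambda>(u, v). deriv H (Complex u v))"
proof -
  have "continuous_on UNIV (deriv H)"
    using assms by (intro holomorphic_on_imp_continuous_on holomorphic_deriv) auto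
  then show ?thesis
    unfolding split_beta by (rule continuous_on_compose2) (intro continuous_intros | simp)+
qed

text \<open>\<open>H A\<close> is the coordinate of the stem function \<open>f\<^sub>0 + i f\<^sub>1\<close> at the blade \<open>e\<^sub>A\<close>, so that
  \<open>slice_ext H (u, w) = f\<^sub>0(u, |w|) + (w / |w|) f\<^sub>1(u, |w|)\<close>.\<close>
definition slice_ext ::
  "('n set \<Rightarrow> complex \<Rightarrow> complex) \<Rightarrow> real \<times> (real ^ ('n::{finite,linorder})) \<Rightarrow> 'n clif" where
  "slice_ext H x =
     (\<chi> A. Re (H A (Complex (fst x) (norm (snd x))))) +
     cmul (para (0, sgn (snd x))) (\<chi> A. Im (H A (Complex (fst x) (norm (snd x)))))"

lemma cmod_Complex_norm: "cmod (Complex u (norm w)) = norm (u, w)"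
  by (simp add: norm_Pair complex_norm)

lemma slice_ext_diff:
  fixes H H' :: "'n::{finite,linorder} set \<Rightarrow> complex \<Rightarrow> complex"
  shows "slice_ext H x - slice_ext H' x = slice_ext (\<lambda>A z. H A z - H' A z) x"
proof -
  have "(\<chi> A. f A - g A) = (\<chi> A. f A) - (\<chi> A. g A)" for f g :: "'n set \<Rightarrow> real"
    by (simp add: vec_eq_iff)
  then show ?thesis
    by (simp add: slice_ext_def cmul_diff_right)
qed

lemma slice_ext_sphere:
  fixes H :: "'n::{finite,linorder} set \<Rightarrow> complex \<Rightarrow> complex"
  assumes conj: "\<And>A z. H A (cnj z) = cnj (H A z)" and j: "j \<in> sphereS"
  shows "slice_ext H (u, v *\<^sub>R j) =
    (\<chi> A. Re (H A (Complex u v))) + cmul (para (0, j)) (\<chi> A. Im (H A (Complex u v)))"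
proof -
  have j1: "norm j = 1" using j by (simp add: sphereS_def)
  consider "v > 0" | "v = 0" | "v < 0" by linarith
  then show ?thesis
  proof cases
    case 1
    then show ?thesis using j1 by (simp add: slice_ext_def sgn_scaleR sgn_div_norm)
  next
    case 2
    have "cnj (Complex u 0) = Complex u 0"
      by (simp add: complex_eq_iff)
    then have "Im (H A (Complex u 0)) = 0" for A
      using conj[of A "Complex u 0"] by (metis Reals_cnj_iff complex_is_Real_iff)
    moreover have "(\<chi> A. 0) = (0 :: 'n clif)"
      by (simp add: vec_eq_iff)
    ultimately show ?thesis
      using 2 by (simp add: slice_ext_def)
  next
    case 3
    have "Complex u (- v) = cnj (Complex u v)" by (simp add: complex_eq_iff)
    then have "(\<chi> A. Im (H A (Complex u (- v)))) = - (\<chi> A. Im (H A (Complex u v)))"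
      and "(\<chi> A. Re (H A (Complex u (- v)))) = (\<chi> A. Re (H A (Complex u v)))"
      by (simp_all add: conj vec_eq_iff)
    with 3 j1 show ?thesis
      by (simp add: slice_ext_def sgn_scaleR sgn_div_norm para_uminus cmul_minus_left cmul_minus_right)
  qed
qed

lemma norm_slice_ext_le:
  fixes H :: "'n::{finite,linorder} set \<Rightarrow> complex \<Rightarrow> complex"
  shows "norm (slice_ext H x) \<le>
    (1 + real CARD('n set) ^ 3) * (\<Sum>A\<in>UNIV. cmod (H A (Complex (fst x) (norm (snd x)))))"
proof -
  define z where "z = Complex (fst x) (norm (snd x))"
  define S where "S = (\<Sum>A\<in>UNIV. cmod (H A z))"
  define N where "N = real CARD('n set)"
  have Re: "norm (\<chi> A. Re (H A z)) \<le> S"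
    unfolding S_def by (rule order_trans[OF norm_le_l1_cart]) (auto intro!: sum_mono abs_Re_le_cmod)
  have Im: "norm (\<chi> A. Im (H A z)) \<le> S"
    unfolding S_def by (rule order_trans[OF norm_le_l1_cart]) (auto intro!: sum_mono abs_Im_le_cmod)
  have "norm (para (0, sgn (snd x))) \<le> N * norm (sgn (snd x))"
    unfolding N_def by (rule norm_para_le)
  also have "\<dots> \<le> N"
    by (simp add: N_def norm_sgn)
  finally have para: "norm (para (0, sgn (snd x))) \<le> N" .
  have "norm (cmul (para (0, sgn (snd x))) (\<chi> A. Im (H A z))) \<le>
      N ^ 2 * norm (para (0, sgn (snd x))) * norm (\<chi> A. Im (H A z))"
    unfolding N_def by (rule norm_cmul_le)
  also have "\<dots> \<le> N ^ 2 * N * S"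
    using para Im by (intro mult_mono) (auto simp: N_def)
  finally have "norm (cmul (para (0, sgn (snd x))) (\<chi> A. Im (H A z))) \<le> N ^ 3 * S"
    by (simp add: power3_eq_cube power2_eq_square)
  with Re have "norm (slice_ext H x) \<le> S + N ^ 3 * S"
    unfolding slice_ext_def z_def[symmetric] by (smt (verit) norm_triangle_ineq)
  then show ?thesis
    by (simp add: S_def z_def N_def algebra_simps)
qed

lemma norm_slice_ext_le_radial:
  fixes H :: "'n::{finite,linorder} set \<Rightarrow> complex \<Rightarrow> complex"
  assumes "\<And>A z. cmod (H A z) \<le> \<Phi> (cmod z)"
  shows "norm (slice_ext H x) \<le> (1 + real CARD('n set) ^ 3) * real CARD('n set) * \<Phi> (norm x)"
proof -
  have "norm (slice_ext H x) \<le>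
      (1 + real CARD('n set) ^ 3) * (\<Sum>A\<in>UNIV. cmod (H A (Complex (fst x) (norm (snd x)))))"
    by (rule norm_slice_ext_le)
  also have "\<dots> \<le> (1 + real CARD('n set) ^ 3) * (\<Sum>A\<in>(UNIV::'n set set). \<Phi> (norm x))"
    using assms[where z = "Complex (fst x) (norm (snd x))"]
    by (intro mult_left_mono sum_mono) (simp_all add: cmod_Complex_norm)
  finally show ?thesis
    by (simp add: mult.assoc)
qed

lemma slice_monogenic_slice_ext:
  fixes H :: "'n::{finite,linorder} set \<Rightarrow> complex \<Rightarrow> complex"
  assumes holo: "\<And>A. H A holomorphic_on UNIV" and conj: "\<And>A z. H A (cnj z) = cnj (H A z)"
  shows "slice_monogenic (slice_ext H)"
proof -
  define D where "D A u v = deriv (H A) (Complex u v)" for A u v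
  have cont: "continuous_on UNIV (\<lambda>(u, v). D A u v)" for A
    unfolding D_def by (rule continuous_on_deriv_Complex[OF holo])
  have cnj_Complex: "Complex u (- v) = cnj (Complex u v)" for u v
    by (simp add: complex_eq_iff)
  note partials = holomorphic_Re_Im_partials[OF holo]
  show ?thesis
    unfolding slice_monogenic_def
  proof (intro exI conjI allI impI)
    show "C1_partials (\<lambda>u v. \<chi> A. Re (H A (Complex u v)))
        (\<lambda>u v. \<chi> A. Re (D A u v)) (\<lambda>u v. \<chi> A. - Im (D A u v))"
      using cont unfolding C1_partials_def D_def has_vector_derivative_vec_iff split_beta
      by (auto intro!: partials continuous_intros)
    show "C1_partials (\<lambda>u v. \<chi> A. Im (H A (Complex u v)))
        (\<lambda>u v. \<chi> A. Im (D A u v)) (\<lambda>u v. \<chi> A. Re (D A u v))"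
      using cont unfolding C1_partials_def D_def has_vector_derivative_vec_iff split_beta
      by (auto intro!: partials continuous_intros)
    fix u v :: real
    show "(\<chi> A. Re (H A (Complex u (- v)))) = (\<chi> A. Re (H A (Complex u v)))"
      and "(\<chi> A. Im (H A (Complex u (- v)))) = - (\<chi> A. Im (H A (Complex u v)))"
      and "(\<chi> A. - Im (D A u v)) = - (\<chi> A. Im (D A u v))"
      by (simp_all add: cnj_Complex conj vec_eq_iff)
    show "(\<chi> A. Re (D A u v)) = (\<chi> A. Re (D A u v))" ..
    fix j :: "real ^ 'n::{finite,linorder}" assume "j \<in> sphereS"
    then show "slice_ext H (u, v *\<^sub>R j) =
        (\<chi> A. Re (H A (Complex u v))) + cmul (para (0, j)) (\<chi> A. Im (H A (Complex u v)))"
      by (rule slice_ext_sphere[where H = H, OF conj])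
  qed
qed

lemma slice_monogenic_imp_slice_ext:
  fixes f :: "real \<times> (real ^ 'n::{finite,linorder}) \<Rightarrow> 'n clif"
  assumes "slice_monogenic f"
  obtains H where "\<And>A. H A holomorphic_on UNIV" "\<And>A z. H A (cnj z) = cnj (H A z)" "f = slice_ext H"
proof -
  obtain f0 f1 f0u f0v f1u f1v where
    C0: "C1_partials f0 f0u f0v" and C1: "C1_partials f1 f1u f1v" and
    even: "\<And>u v. f0 u (- v) = f0 u v" and odd: "\<And>u v. f1 u (- v) = - f1 u v" and
    CR: "\<And>u v. f0u u v = f1v u v" "\<And>u v. f0v u v = - f1u u v" and
    slice: "\<And>u v j. j \<in> sphereS \<Longrightarrow> f (u, v *\<^sub>R j) = f0 u v + cmul (para (0, j)) (f1 u v)"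
    using assms unfolding slice_monogenic_def by blast
  define H where "H A z = Complex (f0 (Re z) (Im z) $ A) (f1 (Re z) (Im z) $ A)" for A z
  have "H A holomorphic_on UNIV" for A
    unfolding H_def
  proof (rule Cauchy_Riemann_imp_holomorphic)
    have cont_nth: "continuous_on UNIV (\<lambda>(u, v). g u v $ A)"
      if "continuous_on UNIV (\<lambda>(u, v). g u v)" for g :: "real \<Rightarrow> real \<Rightarrow> 'n clif"
      using continuous_on_component[OF that, of A] by (simp add: split_beta)
    show "continuous_on UNIV (\<lambda>(u, v). f0v u v $ A)" "continuous_on UNIV (\<lambda>(u, v). f1v u v $ A)"
      using C0 C1 by (auto simp: C1_partials_def intro: cont_nth)
  qed (use C0 C1 in \<open>auto simp: C1_partials_def has_vector_derivative_vec_iff CR\<close>)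
  moreover have "H A (cnj z) = cnj (H A z)" for A z
    by (simp add: H_def even odd complex_eq_iff)
  moreover have "f = slice_ext H"
  proof
    fix x :: "real \<times> (real ^ 'n::{finite,linorder})"
    obtain u w where x: "x = (u, w)" by fastforce
    have re: "(\<chi> A. Re (H A (Complex u v))) = f0 u v"
      and im: "(\<chi> A. Im (H A (Complex u v))) = f1 u v" for v
      by (simp_all add: H_def vec_eq_iff)
    show "f x = slice_ext H x"
    proof (cases "w = 0")
      case True
      fix i :: 'n
      have "f1 u 0 = 0"
        using odd[of u 0] by (simp add: vec_eq_iff)
      then have "f (u, 0 *\<^sub>R axis i 1) = f0 u 0"
        using slice[of "axis i 1" u 0] by (simp add: sphereS_def)
      then show ?thesis
        using True by (simp add: x slice_ext_def re)
    next
      case False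
      then have "sgn w \<in> sphereS"
        by (simp add: sphereS_def norm_sgn)
      from slice[OF this, of u "norm w"] False show ?thesis
        by (simp add: x slice_ext_def re im sgn_div_norm)
    qed
  qed
  ultimately show ?thesis
    using that by blast
qed

text \<open>At \<open>u \<plusminus> v e\<^sub>i\<close> the slice extension takes the values \<open>f\<^sub>0 \<plusminus> e\<^sub>i f\<^sub>1\<close>; half their sum and
  difference recover \<open>f\<^sub>0\<close> and \<open>e\<^sub>i f\<^sub>1\<close>, and multiplication by \<open>e\<^sub>i\<close> preserves norms.\<close>
lemma norm_stem_le:
  fixes H :: "'n::{finite,linorder} set \<Rightarrow> complex \<Rightarrow> complex"
  assumes conj: "\<And>A z. H A (cnj z) = cnj (H A z)"
    and bound: "\<And>x. norm (slice_ext H x) \<le> \<Phi> (norm x)"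
  shows "cmod (H A z) \<le> 2 * \<Phi> (cmod z)"
proof -
  fix i :: 'n
  define a where "a = (\<chi> B. Re (H B z))"
  define b where "b = (\<chi> B. Im (H B z))"
  let ?L = "cmul (para (0, axis i 1))"
  let ?p = "slice_ext H (Re z, Im z *\<^sub>R axis i 1)" and ?q = "slice_ext H (Re z, (- Im z) *\<^sub>R axis i 1)"
  have j: "axis i 1 \<in> sphereS"
    by (simp add: sphereS_def)
  have p: "?p = a + ?L b"
    using slice_ext_sphere[where H = H, OF conj j, of "Re z" "Im z"] by (simp add: a_def b_def)
  have "Complex (Re z) (- Im z) = cnj z"
    by (simp add: complex_eq_iff)
  moreover have "(\<chi> B. - Im (H B z)) = - b"
    by (simp add: b_def vec_eq_iff)
  ultimately have q: "?q = a - ?L b"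
    using slice_ext_sphere[where H = H, OF conj j, of "Re z" "- Im z"]
    by (simp add: a_def conj cmul_minus_right)
  have "norm a = norm ((1 / 2) *\<^sub>R (?p + ?q))" and "norm b = norm ((1 / 2) *\<^sub>R (?p - ?q))"
    unfolding p q by (simp_all add: norm_cmul_para_axis flip: scaleR_2)
  then have "norm a + norm b \<le> norm ?p + norm ?q"
    using norm_triangle_ineq[of ?p ?q] norm_triangle_ineq4[of ?p ?q] by simp
  also have "\<dots> \<le> 2 * \<Phi> (cmod z)"
    using bound[of "(Re z, Im z *\<^sub>R axis i 1)"] bound[of "(Re z, (- Im z) *\<^sub>R axis i 1)"]
    by (simp add: norm_Pair cmod_def)
  finally show ?thesis
    using cmod_le[of "H A z"] component_le_norm_cart[of a A] component_le_norm_cart[of b A]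
    by (simp add: a_def b_def)
qed

lemma Montel_finite_family:
  fixes h :: "nat \<Rightarrow> 'i::finite \<Rightarrow> complex \<Rightarrow> complex"
  assumes holo: "\<And>k i. h k i holomorphic_on UNIV"
    and bounded: "\<And>i K. compact K \<Longrightarrow> \<exists>B. \<forall>k. \<forall>z\<in>K. norm (h k i z) \<le> B"
  obtains r H where "strict_mono r" "\<And>i. H i holomorphic_on UNIV"
    "\<And>i K. compact K \<Longrightarrow> uniform_limit K (\<lambda>k. h (r k) i) (H i) sequentially"
proof -
  have "\<exists>r H. strict_mono r \<and> (\<forall>i\<in>S. H i holomorphic_on UNIV \<and>
          (\<forall>K. compact K \<longrightarrow> uniform_limit K (\<lambda>k. h (r k) i) (H i) sequentially))"
    if "finite S" for S
    using that
  proof (induction S rule: finite_induct)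
    case empty
    show ?case
      using strict_mono_id by blast
  next
    case (insert i S)
    then obtain r H where r: "strict_mono r" and H: "\<forall>j\<in>S. H j holomorphic_on UNIV \<and>
          (\<forall>K. compact K \<longrightarrow> uniform_limit K (\<lambda>k. h (r k) j) (H j) sequentially)"
      by blast
    obtain g r' where g: "g holomorphic_on UNIV" and r': "strict_mono (r' :: nat \<Rightarrow> nat)"
      and ul: "\<And>K. compact K \<Longrightarrow> uniform_limit K ((\<lambda>k. h (r k) i) \<circ> r') g sequentially"
      by (rule Montel[of UNIV "range (\<lambda>k. h (r k) i)" "\<lambda>k. h (r k) i"]) (use holo bounded in fastforce)+
    have "uniform_limit K (\<lambda>k. h (r (r' k)) j) (H j) sequentially" if "j \<in> S" "compact K" for j K
      using filterlim_compose[OF H[rule_format, OF that(1), THEN conjunct2, rule_format, OF that(2)]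
          filterlim_subseq[OF r']] by (simp add: o_def)
    then have "\<forall>j\<in>insert i S. (H(i := g)) j holomorphic_on UNIV \<and>
          (\<forall>K. compact K \<longrightarrow> uniform_limit K (\<lambda>k. h ((r \<circ> r') k) j) ((H(i := g)) j) sequentially)"
      using g ul H by (auto simp: o_def)
    then show ?case
      using strict_mono_o[OF r r'] by blast
  qed
  from this[of UNIV] show ?thesis
    using that by auto
qed

lemma slice_ext_uniform_limit:
  fixes Hk :: "nat \<Rightarrow> 'n::{finite,linorder} set \<Rightarrow> complex \<Rightarrow> complex"
  assumes "\<And>A. uniform_limit (cball 0 R) (\<lambda>k. Hk k A) (H A) sequentially"
  shows "uniform_limit (cball 0 R) (\<lambda>k. slice_ext (Hk k)) (slice_ext H) sequentially"
proof (rule uniform_limitI)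
  fix e :: real
  assume e: "0 < e"
  define K where "K = 1 + real CARD('n set) ^ 3"
  have K: "0 < K"
    unfolding K_def by (simp add: add_pos_nonneg)
  define C where "C = K * real CARD('n set)"
  have C: "0 < C"
    using K by (simp add: C_def)
  have "\<forall>\<^sub>F k in sequentially. \<forall>A. \<forall>z\<in>cball 0 R. dist (Hk k A z) (H A z) < e / C"
    using assms e C by (intro eventually_all_finite) (simp add: uniform_limit_iff)
  then show "\<forall>\<^sub>F k in sequentially. \<forall>x\<in>cball 0 R. dist (slice_ext (Hk k) x) (slice_ext H x) < e"
  proof eventually_elim
    case (elim k)
    show ?case
    proof
      fix x :: "real \<times> (real ^ 'n::{finite,linorder})"
      assume "x \<in> cball 0 R"
      then have z: "Complex (fst x) (norm (snd x)) \<in> cball 0 R"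
        by (simp add: cmod_Complex_norm)
      have "dist (slice_ext (Hk k) x) (slice_ext H x) = norm (slice_ext (\<lambda>A z. Hk k A z - H A z) x)"
        by (simp add: dist_norm slice_ext_diff)
      also have "\<dots> \<le> K *
          (\<Sum>A\<in>UNIV. cmod (Hk k A (Complex (fst x) (norm (snd x))) - H A (Complex (fst x) (norm (snd x)))))"
        unfolding K_def by (rule norm_slice_ext_le)
      also have "\<dots> < K * (\<Sum>A\<in>(UNIV :: 'n set set). e / C)"
        using elim z K by (intro mult_strict_left_mono sum_strict_mono) (auto simp: dist_norm)
      also have "\<dots> = e"
        using K by (simp add: C_def)
      finally show "dist (slice_ext (Hk k) x) (slice_ext H x) < e" .
    qed
  qed
qed

lemma slice_ext_subseq_uniform_limit:
  fixes Hk :: "nat \<Rightarrow> 'n::{finite,linorder} set \<Rightarrow> complex \<Rightarrow> complex"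
  assumes holo: "\<And>k A. Hk k A holomorphic_on UNIV"
    and conj: "\<And>k A z. Hk k A (cnj z) = cnj (Hk k A z)"
    and bound: "\<And>k A z. cmod (Hk k A z) \<le> \<Phi> (cmod z)"
    and locally_bounded: "\<And>R. bdd_above (\<Phi> ` {0..R})"
  obtains r H where "strict_mono r" "\<And>A. H A holomorphic_on UNIV"
    "\<And>A z. H A (cnj z) = cnj (H A z)" "\<And>A z. cmod (H A z) \<le> \<Phi> (cmod z)"
    "\<And>R. uniform_limit (cball 0 R) (\<lambda>k. slice_ext (Hk (r k))) (slice_ext H) sequentially"
proof -
  have bounded: "\<exists>B. \<forall>k. \<forall>z\<in>K. norm (Hk k A z) \<le> B" if K: "compact K" for A K
  proof -
    obtain R where "\<And>z. z \<in> K \<Longrightarrow> cmod z \<le> R"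
      using compact_imp_bounded[OF K] by (auto simp: bounded_iff)
    moreover obtain B where "\<forall>t\<in>{0..R}. \<Phi> t \<le> B"
      using locally_bounded[of R] by (auto simp: bdd_above_def atLeastAtMost_iff)
    ultimately show ?thesis
      using bound by (meson atLeastAtMost_iff norm_ge_zero order_trans)
  qed
  obtain r H where r: "strict_mono r" and holoH: "\<And>A. H A holomorphic_on UNIV"
    and ul: "\<And>A K. compact K \<Longrightarrow> uniform_limit K (\<lambda>k. Hk (r k) A) (H A) sequentially"
    using Montel_finite_family[of Hk, OF holo bounded] by blast
  have lim: "(\<lambda>k. Hk (r k) A z) \<longlonglongrightarrow> H A z" for A z
    using tendsto_uniform_limitI[OF ul[of "{z}"]] by simp
  show ?thesis
  proof (rule that[OF r holoH])
    show "H A (cnj z) = cnj (H A z)" for A z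
      using LIMSEQ_unique[OF lim[of A "cnj z"]] tendsto_cnj[OF lim[of A z]] by (simp add: conj)
    show "cmod (H A z) \<le> \<Phi> (cmod z)" for A z
      by (rule LIMSEQ_le_const2[OF tendsto_norm[OF lim[of A z]]]) (use bound in auto)
    show "uniform_limit (cball 0 R) (\<lambda>k. slice_ext (Hk (r k))) (slice_ext H) sequentially" for R
      by (intro slice_ext_uniform_limit ul compact_cball)
  qed
qed

lemma proximate_order_powr_bounded:
  assumes "proximate_order \<rho>"
  shows "bdd_above ((\<lambda>r. r powr \<rho> r) ` {0..R})"
proof -
  have nonneg: "\<And>r. r \<ge> 0 \<Longrightarrow> \<rho> r \<ge> 0"
    and diff: "\<And>r. r \<ge> 0 \<Longrightarrow> \<rho> differentiable (at r within {0..})"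
    using assms unfolding proximate_order_def by auto
  define R' where "R' = max 1 R"
  have "continuous_on {0..} \<rho>"
    using diff by (auto simp: continuous_on_eq_continuous_within intro: differentiable_imp_continuous_within)
  then have "continuous_on {0..R'} \<rho>"
    by (rule continuous_on_subset) auto
  then have "bounded (\<rho> ` {0..R'})"
    by (intro compact_imp_bounded compact_continuous_image) auto
  then obtain B where B: "\<forall>r\<in>{0..R'}. \<bar>\<rho> r\<bar> \<le> B"
    by (auto simp: bounded_real)
  have "r powr \<rho> r \<le> 1 + R' powr B" if r: "r \<in> {0..R}" for r
  proof (cases "r \<le> 1")
    case True
    then have "r powr \<rho> r \<le> 1"
      using r nonneg by (intro powr_le1) auto
    then show ?thesis
      by (smt (verit) powr_ge_zero)
  next
    case False
    have "\<bar>\<rho> r\<bar> \<le> B"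
      using B r by (auto simp: R'_def)
    then have "r powr \<rho> r \<le> r powr B"
      using False by (intro powr_mono) auto
    also have "\<dots> \<le> R' powr B"
      using \<open>\<bar>\<rho> r\<bar> \<le> B\<close> r False by (intro powr_mono2) (auto simp: R'_def)
    finally show ?thesis
      by simp
  qed
  then show ?thesis
    by (rule bdd_aboveI2)
qed

lemma proximate_order_powr_at_top:
  assumes "proximate_order \<rho>"
  shows "filterlim (\<lambda>r. r powr \<rho> r) at_top at_top"
proof -
  obtain \<rho>0 where \<rho>0: "\<rho>0 > 0" and lim: "(\<rho> \<longlongrightarrow> \<rho>0) at_top"
    using assms unfolding proximate_order_def by auto
  have "eventually (\<lambda>r. \<rho> r > \<rho>0 / 2) at_top"
    using order_tendstoD(1)[OF lim, of "\<rho>0 / 2"] \<rho>0 by simp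
  then have "eventually (\<lambda>r. r powr (\<rho>0 / 2) \<le> r powr \<rho> r) at_top"
    using eventually_ge_at_top[of 1] by eventually_elim (auto intro: powr_mono)
  with real_powr_at_top[of "\<rho>0 / 2"] \<rho>0 show ?thesis
    by (auto intro: filterlim_at_top_mono)
qed

lemma Anorm_le:
  assumes "\<And>x. norm (f x) * weight \<rho> \<sigma> x \<le> B"
  shows "Anorm \<rho> \<sigma> f \<le> B"
  unfolding Anorm_def using assms by (intro cSUP_least) auto

lemma norm_weight_le_Anorm:
  assumes "bdd_above (range (\<lambda>x. norm (f x) * weight \<rho> \<sigma> x))"
  shows "norm (f x) * weight \<rho> \<sigma> x \<le> Anorm \<rho> \<sigma> f"
  unfolding Anorm_def using assms by (rule cSUP_upper[OF UNIV_I])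

lemma Anorm_nonneg:
  assumes "bdd_above (range (\<lambda>x. norm (f x) * weight \<rho> \<sigma> x))"
  shows "0 \<le> Anorm \<rho> \<sigma> f"
  using norm_weight_le_Anorm[OF assms, of 0] by (smt (verit) exp_gt_zero norm_ge_zero weight_def zero_le_mult_iff)

lemma norm_le_Anorm_exp:
  assumes "f \<in> Aspace \<rho> \<sigma>"
  shows "norm (f x) \<le> Anorm \<rho> \<sigma> f * exp (\<sigma> * norm x powr \<rho> (norm x))"
proof -
  have "norm (f x) * weight \<rho> \<sigma> x \<le> Anorm \<rho> \<sigma> f"
    using assms by (intro norm_weight_le_Anorm) (simp add: Aspace_def)
  then show ?thesis
    by (simp add: weight_def exp_minus field_simps)
qed

lemma in_AspaceI:
  assumes "slice_monogenic f" and "\<And>x. norm (f x) \<le> D * exp (\<sigma> * norm x powr \<rho> (norm x))"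
  shows "f \<in> Aspace \<rho> \<sigma>"
proof -
  have "norm (f x) * weight \<rho> \<sigma> x \<le> D" for x
    using assms(2)[of x] by (simp add: weight_def exp_minus field_simps)
  then have "bdd_above (range (\<lambda>x. norm (f x) * weight \<rho> \<sigma> x))"
    by (rule bdd_aboveI2)
  with assms(1) show ?thesis
    by (simp add: Aspace_def)
qed

lemma Aspace_mono:
  assumes "\<sigma>1 \<le> \<sigma>2"
  shows "Aspace \<rho> \<sigma>1 \<subseteq> Aspace \<rho> \<sigma>2"
proof
  fix f assume f: "f \<in> Aspace \<rho> \<sigma>1"
  have "norm (f x) \<le> Anorm \<rho> \<sigma>1 f * exp (\<sigma>2 * norm x powr \<rho> (norm x))" for x
  proof -
    have "exp (\<sigma>1 * norm x powr \<rho> (norm x)) \<le> exp (\<sigma>2 * norm x powr \<rho> (norm x))"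
      using assms by (simp add: mult_right_mono)
    moreover have "0 \<le> Anorm \<rho> \<sigma>1 f"
      using f by (intro Anorm_nonneg) (simp add: Aspace_def)
    ultimately show ?thesis
      using norm_le_Anorm_exp[OF f, of x] by (meson mult_left_mono order_trans)
  qed
  with f show "f \<in> Aspace \<rho> \<sigma>2"
    by (intro in_AspaceI) (auto simp: Aspace_def)
qed

text \<open>Inside a ball the weight is at most 1 and uniform convergence applies; outside a large ball
  the growth bound leaves the factor \<open>exp (- (\<sigma>\<^sub>2 - \<sigma>\<^sub>1) r\<^bsup>\<rho>(r)\<^esup>)\<close>, which tends to 0.\<close>
lemma Anorm_tendsto_0:
  fixes G :: "nat \<Rightarrow> real \<times> (real ^ 'n::finite) \<Rightarrow> 'n clif"
  assumes prox: "proximate_order \<rho>" and "0 \<le> \<sigma>1" and "\<sigma>1 < \<sigma>2"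
    and growth: "\<And>k x. norm (G k x) \<le> D * exp (\<sigma>1 * norm x powr \<rho> (norm x))"
    and locally_uniform: "\<And>R. uniform_limit (cball 0 R) G (\<lambda>_. 0) sequentially"
  shows "(\<lambda>k. Anorm \<rho> \<sigma>2 (G k)) \<longlonglongrightarrow> 0"
proof (rule LIMSEQ_I)
  fix e :: real
  assume e: "0 < e"
  have "filterlim (\<lambda>t. - (\<sigma>2 - \<sigma>1) * t powr \<rho> t) at_bot at_top"
    using \<open>\<sigma>1 < \<sigma>2\<close> by (intro filterlim_tendsto_neg_mult_at_bot[OF tendsto_const] proximate_order_powr_at_top[OF prox]) auto
  then have "((\<lambda>t. D * exp (- (\<sigma>2 - \<sigma>1) * t powr \<rho> t)) \<longlongrightarrow> 0) at_top"
    by (intro tendsto_mult_right_zero filterlim_compose[OF exp_at_bot])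
  then have "eventually (\<lambda>t. D * exp (- (\<sigma>2 - \<sigma>1) * t powr \<rho> t) < e / 2) at_top"
    using e by (intro order_tendstoD(2)) auto
  then obtain R where R: "\<And>t. R \<le> t \<Longrightarrow> D * exp (- (\<sigma>2 - \<sigma>1) * t powr \<rho> t) < e / 2"
    unfolding eventually_at_top_linorder by blast
  have "\<exists>k0. \<forall>k\<ge>k0. \<forall>x\<in>cball 0 R. dist (G k x) 0 < e / 2"
    using locally_uniform[of R] e unfolding uniform_limit_sequentially_iff by (meson half_gt_zero)
  then obtain k0 where k0: "\<forall>k\<ge>k0. \<forall>x\<in>cball 0 R. dist (G k x) 0 < e / 2"
    by blast
  show "\<exists>k0. \<forall>k\<ge>k0. norm (Anorm \<rho> \<sigma>2 (G k) - 0) < e"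
  proof (intro exI allI impI)
    fix k assume k: "k0 \<le> k"
    have pointwise: "norm (G k x) * weight \<rho> \<sigma>2 x \<le> e / 2" for x
    proof (cases "norm x \<le> R")
      case True
      have "weight \<rho> \<sigma>2 x \<le> 1"
        using assms(2,3) by (simp add: weight_def)
      moreover have "norm (G k x) < e / 2"
        using k0 k True by simp
      ultimately show ?thesis
        by (smt (verit) mult_left_le norm_ge_zero)
    next
      case False
      have "norm (G k x) * weight \<rho> \<sigma>2 x \<le> D * exp (\<sigma>1 * norm x powr \<rho> (norm x)) * weight \<rho> \<sigma>2 x"
        using growth by (rule mult_right_mono) (simp add: weight_def)
      also have "\<dots> = D * exp (- (\<sigma>2 - \<sigma>1) * norm x powr \<rho> (norm x))"
        by (simp add: weight_def algebra_simps flip: exp_add)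
      also have "\<dots> < e / 2"
        using R False by simp
      finally show ?thesis
        by simp
    qed
    have "0 \<le> Anorm \<rho> \<sigma>2 (G k)"
      using pointwise by (intro Anorm_nonneg bdd_aboveI2)
    moreover have "Anorm \<rho> \<sigma>2 (G k) \<le> e / 2"
      using pointwise by (rule Anorm_le)
    ultimately show "norm (Anorm \<rho> \<sigma>2 (G k) - 0) < e"
      using e by simp
  qed
qed

lemma proximate_order_exp_locally_bounded:
  assumes "proximate_order \<rho>" and "0 \<le> c" and "0 \<le> \<sigma>"
  shows "bdd_above ((\<lambda>t. c * exp (\<sigma> * t powr \<rho> t)) ` {0..R})"
proof -
  obtain B where "\<forall>t\<in>{0..R}. t powr \<rho> t \<le> B"
    using proximate_order_powr_bounded[OF assms(1), of R] by (auto simp: bdd_above_def)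
  then have "c * exp (\<sigma> * t powr \<rho> t) \<le> c * exp (\<sigma> * B)" if "t \<in> {0..R}" for t
    using that assms(2,3) by (auto intro!: mult_left_mono)
  then show ?thesis
    by (rule bdd_aboveI2)
qed

lemma slice_monogenic_seq_imp_slice_ext:
  fixes F :: "nat \<Rightarrow> real \<times> (real ^ 'n::{finite,linorder}) \<Rightarrow> 'n clif"
  assumes "\<And>k. slice_monogenic (F k)"
  obtains Hk where "\<And>k A. Hk k A holomorphic_on UNIV" "\<And>k A z. Hk k A (cnj z) = cnj (Hk k A z)"
    "\<And>k. F k = slice_ext (Hk k)"
proof -
  have "\<exists>H. (\<forall>A. H A holomorphic_on UNIV) \<and> (\<forall>A z. H A (cnj z) = cnj (H A z)) \<and> F k = slice_ext H"
    for k
    using assms[of k] by (rule slice_monogenic_imp_slice_ext) blast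
  then have "\<exists>Hk. \<forall>k. (\<forall>A. Hk k A holomorphic_on UNIV) \<and> (\<forall>A z. Hk k A (cnj z) = cnj (Hk k A z)) \<and>
      F k = slice_ext (Hk k)"
    by (intro choice allI)
  with that show ?thesis
    by blast
qed

lemma Aspace_bounded_seq_has_convergent_subseq:
  fixes F :: "nat \<Rightarrow> real \<times> (real ^ 'n::{finite,linorder}) \<Rightarrow> 'n clif"
  assumes prox: "proximate_order \<rho>" and \<sigma>: "0 \<le> \<sigma>1" "\<sigma>1 < \<sigma>2"
    and F: "\<And>k. F k \<in> Aspace \<rho> \<sigma>1" and M: "\<And>k. Anorm \<rho> \<sigma>1 (F k) \<le> M"
  obtains r g where "strict_mono r" "g \<in> Aspace \<rho> \<sigma>2"
    "(\<lambda>k. Anorm \<rho> \<sigma>2 (\<lambda>x. F (r k) x - g x)) \<longlonglongrightarrow> 0"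
proof -
  define E where "E t = exp (\<sigma>1 * t powr \<rho> t)" for t
  have "0 \<le> M"
    using Anorm_nonneg[of "F 0" \<rho> \<sigma>1] F[of 0] M[of 0] by (simp add: Aspace_def)
  have F_growth: "norm (F k x) \<le> M * E (norm x)" for k x
  proof -
    have "norm (F k x) \<le> Anorm \<rho> \<sigma>1 (F k) * E (norm x)"
      using norm_le_Anorm_exp[OF F] by (simp add: E_def)
    also have "\<dots> \<le> M * E (norm x)"
      using M[of k] by (simp add: E_def)
    finally show ?thesis .
  qed
  obtain Hk where Hk_holo: "\<And>k A. Hk k A holomorphic_on UNIV"
    and Hk_cnj: "\<And>k A z. Hk k A (cnj z) = cnj (Hk k A z)" and F_eq: "\<And>k. F k = slice_ext (Hk k)"
    using slice_monogenic_seq_imp_slice_ext[of F] F unfolding Aspace_def by blast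
  have bound: "cmod (Hk k A z) \<le> 2 * M * E (cmod z)" for k A z
  proof -
    have "norm (slice_ext (Hk k) x) \<le> M * E (norm x)" for x
      using F_growth[of k x] unfolding F_eq .
    from norm_stem_le[where H = "Hk k" and \<Phi> = "\<lambda>t. M * E t", OF Hk_cnj this] show ?thesis
      by (simp add: mult.assoc)
  qed
  have locally_bounded: "bdd_above ((\<lambda>t. 2 * M * E t) ` {0..R})" for R
    unfolding E_def using proximate_order_exp_locally_bounded[OF prox, of "2 * M" \<sigma>1] \<open>0 \<le> M\<close> \<sigma>(1)
    by (simp add: mult.assoc)
  obtain r H where r: "strict_mono r" and H_holo: "\<And>A. H A holomorphic_on UNIV"
    and H_cnj: "\<And>A z. H A (cnj z) = cnj (H A z)" and H_bound: "\<And>A z. cmod (H A z) \<le> 2 * M * E (cmod z)"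
    and H_lim: "\<And>R. uniform_limit (cball 0 R) (\<lambda>k. slice_ext (Hk (r k))) (slice_ext H) sequentially"
    using slice_ext_subseq_uniform_limit[where Hk = Hk and \<Phi> = "\<lambda>t. 2 * M * E t",
        OF Hk_holo Hk_cnj bound locally_bounded] by blast
  define C where "C = (1 + real CARD('n set) ^ 3) * real CARD('n set) * (2 * M)"
  have g_growth: "norm (slice_ext H x) \<le> C * E (norm x)" for x
    using norm_slice_ext_le_radial[where H = H and \<Phi> = "\<lambda>t. 2 * M * E t", OF H_bound]
    unfolding C_def by (simp only: mult.assoc)
  have "slice_ext H \<in> Aspace \<rho> \<sigma>2"
    using in_AspaceI[OF slice_monogenic_slice_ext[OF H_holo H_cnj] g_growth[unfolded E_def]]
      Aspace_mono[OF less_imp_le[OF \<sigma>(2)]] by blast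
  moreover have "(\<lambda>k. Anorm \<rho> \<sigma>2 (\<lambda>x. F (r k) x - slice_ext H x)) \<longlonglongrightarrow> 0"
  proof (rule Anorm_tendsto_0[OF prox \<sigma>])
    show "norm (F (r k) x - slice_ext H x) \<le> (M + C) * exp (\<sigma>1 * norm x powr \<rho> (norm x))" for k x
      using norm_triangle_ineq4[of "F (r k) x" "slice_ext H x"] F_growth[of "r k" x] g_growth[of x]
      by (simp add: E_def distrib_right)
    show "uniform_limit (cball 0 R) (\<lambda>k x. F (r k) x - slice_ext H x) (\<lambda>_. 0) sequentially" for R
      using uniform_limit_minus[OF H_lim uniform_limit_const[where c = "slice_ext H"]] by (simp add: F_eq)
  qed
  ultimately show ?thesis
    using that r by blast
qed

theorem lemma3p2:
  fixes \<rho> :: "real \<Rightarrow> real" and \<sigma>1 \<sigma>2 :: real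
  assumes "proximate_order \<rho>" and "0 < \<sigma>1" and "\<sigma>1 < \<sigma>2"
  shows "(Aspace \<rho> \<sigma>1 :: (real \<times> (real ^ 'n::{finite,linorder}) \<Rightarrow> real ^ ('n::{finite,linorder} set)) set)
           \<subseteq> Aspace \<rho> \<sigma>2 \<and>
    (\<forall>(F :: nat \<Rightarrow> real \<times> (real ^ 'n::{finite,linorder}) \<Rightarrow> real ^ ('n::{finite,linorder} set)) M.
       (\<forall>k. F k \<in> Aspace \<rho> \<sigma>1 \<and> Anorm \<rho> \<sigma>1 (F k) \<le> M) \<longrightarrow>
       (\<exists>r g. strict_mono r \<and> g \<in> Aspace \<rho> \<sigma>2 \<and>
          (\<lambda>k. Anorm \<rho> \<sigma>2 (\<lambda>x. F (r k) x - g x)) \<longlonglongrightarrow> 0))"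
proof (intro conjI allI impI)
  show "Aspace \<rho> \<sigma>1 \<subseteq> Aspace \<rho> \<sigma>2"
    using assms(3) by (intro Aspace_mono) simp
  fix F :: "nat \<Rightarrow> real \<times> (real ^ 'n::{finite,linorder}) \<Rightarrow> real ^ ('n::{finite,linorder} set)" and M
  assume "\<forall>k. F k \<in> Aspace \<rho> \<sigma>1 \<and> Anorm \<rho> \<sigma>1 (F k) \<le> M"
  then obtain r g where "strict_mono r" "g \<in> Aspace \<rho> \<sigma>2" "(\<lambda>k. Anorm \<rho> \<sigma>2 (\<lambda>x. F (r k) x - g x)) \<longlonglongrightarrow> 0"
    using Aspace_bounded_seq_has_convergent_subseq[OF assms(1) less_imp_le[OF assms(2)] assms(3)] by blast
  then show "\<exists>r g. strict_mono r \<and> g \<in> Aspace \<rho> \<sigma>2 \<and> (\<lambda>k. Anorm \<rho> \<sigma>2 (\<lambda>x. F (r k) x - g x)) \<longlonglongrightarrow> 0"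
    by blast
qed

end
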